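(* If $D_{15,14,6}$ is unsatisfiable, i.e., there is no packing $14$-coloring of $D_{15}$ that assigns color $6$ to the vertex $(0,0)$, then $\chi_\rho(\mathbb{Z}^2) \geq 15$.
   Context: $\mathbb{Z}^2$ denotes the graph with vertex set $\mathbb{Z}\times\mathbb{Z}$ and edges between points at $\ell_1$ distance $1$; its graph distance $d$ is the $\ell_1$ distance. A packing $k$-coloring of a graph $G=(V,E)$ is a function $f: V\to\{1,\ldots,k\}$ such that for any distinct $u,v\in V$ and any color $c$, $f(u)=f(v)=c$ implies $d(u,v)>c$. The packing chromatic number $\chi_\rho(G)$ is the least $k$ for which $G$ admits a packing $k$-coloring. For $r\ge 0$, $D_r$ is the subgraph of $\mathbb{Z}^2$ induced by $\{u \in \mathbb{Z}^2 : d(u,(0,0)) \le r\}$, with distances measured as $\ell_1$ distances. $D_{r,k,c}$ denotes the problem of deciding whether $D_r$ admits a packing $k$-coloring assigning color $c$ to $(0,0)$; it is called unsatisfiable if no such coloring exists. *)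

theory Defs
  imports Main "HOL-Library.Extended_Nat"
begin

text \<open>Graph distance of the grid graph Z^2, i.e. the l1 distance.\<close>
definition dist1 :: "int \<times> int \<Rightarrow> int \<times> int \<Rightarrow> int" where
  "dist1 u v = \<bar>fst u - fst v\<bar> + \<bar>snd u - snd v\<bar>"

definition packing_coloring :: "(int \<times> int) set \<Rightarrow> nat \<Rightarrow> (int \<times> int \<Rightarrow> nat) \<Rightarrow> bool" where
  "packing_coloring V k f \<longleftrightarrow>
     (\<forall>v\<in>V. f v \<in> {1..k}) \<and>
     (\<forall>u\<in>V. \<forall>v\<in>V. u \<noteq> v \<and> f u = f v \<longrightarrow> dist1 u v > int (f u))"

definition diamond :: "nat \<Rightarrow> (int \<times> int) set" where
  "diamond r = {u. dist1 u (0,0) \<le> int r}"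

definition D_sat :: "nat \<Rightarrow> nat \<Rightarrow> nat \<Rightarrow> bool" where
  "D_sat r k c \<longleftrightarrow> (\<exists>f. packing_coloring (diamond r) k f \<and> f (0,0) = c)"

text \<open>Packing chromatic number of Z^2 (infinity if no packing coloring exists).\<close>
definition chi_rho_Z2 :: enat where
  "chi_rho_Z2 = Inf {enat k | k. \<exists>f. packing_coloring UNIV k f}"

end

theory Submission
  imports Defs
begin

text \<open>Packing colourings of \<open>\<int>\<^sup>2\<close> are invariant under translation, so a colouring of the
  whole grid with at most 14 colours can be shifted to put colour 6 at the origin; if colour 6
  is not used at all, the origin may simply be recoloured 6. Restricting to \<open>D\<^sub>1\<^sub>5\<close> then
  gives a packing 14-colouring of \<open>D\<^sub>1\<^sub>5\<close> with colour 6 at the origin.\<close>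

lemma packing_coloring_mono:
  assumes "packing_coloring V k f" "k \<le> k'" "W \<subseteq> V"
  shows "packing_coloring W k' f"
  using assms unfolding packing_coloring_def by (meson atLeastAtMost_iff le_trans subsetD)

lemma dist1_translate:
  "dist1 (fst u + a, snd u + b) (fst v + a, snd v + b) = dist1 u v"
  by (simp add: dist1_def)

lemma packing_coloring_translate:
  assumes "packing_coloring UNIV k f"
  shows "packing_coloring UNIV k (\<lambda>u. f (fst u + a, snd u + b))"
proof -
  have "(fst u + a, snd u + b) \<noteq> (fst v + a, snd v + b)" if "u \<noteq> v" for u v :: "int \<times> int"
    using that by (auto simp: prod_eq_iff)
  then show ?thesis
    using assms unfolding packing_coloring_def by (metis UNIV_I dist1_translate)
qed

lemma packing_coloring_recolor_unused:
  assumes "packing_coloring V k f" "c \<in> {1..k}" "c \<notin> f ` V"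
  shows "packing_coloring V k (f(v := c))"
  using assms unfolding packing_coloring_def by (metis fun_upd_apply image_eqI)

lemma packing_coloring_UNIV_imp_D_sat:
  assumes f: "packing_coloring UNIV k f" and "k \<le> k'" and c: "c \<in> {1..k'}"
  shows "D_sat r k' c"
proof (cases "c \<in> range f")
  case True
  then obtain w where w: "f w = c" by blast
  let ?g = "\<lambda>u. f (fst u + fst w, snd u + snd w)"
  have "packing_coloring (diamond r) k' ?g"
    using packing_coloring_translate[OF f] \<open>k \<le> k'\<close> by (rule packing_coloring_mono) simp
  moreover have "?g (0, 0) = c" using w by simp
  ultimately show ?thesis unfolding D_sat_def by blast
next
  case False
  have "packing_coloring UNIV k' f" using f \<open>k \<le> k'\<close> by (rule packing_coloring_mono) simp
  then have "packing_coloring UNIV k' (f((0, 0) := c))"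
    using c False by (rule packing_coloring_recolor_unused)
  then have "packing_coloring (diamond r) k' (f((0, 0) := c))"
    by (rule packing_coloring_mono) simp_all
  then show ?thesis unfolding D_sat_def by (metis fun_upd_same)
qed

theorem lemma2:
  assumes "\<not> D_sat 15 14 6"
  shows "chi_rho_Z2 \<ge> 15"
  unfolding chi_rho_Z2_def
proof (rule Inf_greatest)
  fix x assume "x \<in> {enat k | k. \<exists>f. packing_coloring UNIV k f}"
  then obtain k f where x: "x = enat k" and f: "packing_coloring UNIV k f" by blast
  have "\<not> k \<le> 14"
    using packing_coloring_UNIV_imp_D_sat[OF f, of 14 6 15] assms by auto
  then show "15 \<le> x" using x by (simp add: numeral_eq_enat)
qed

end
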